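(* Let $V$ be one of the three $2$-dimensional commutative unital algebras over $\mathbb F_2$ with basis $e,x$, where $e$ is the unit and (A) $x\circ x=0$; (B) $x\circ x=x$; (C) $x\circ x=e+x$. Consider the associated differential calculus on $A=\mathbb F_2[e,x]$. Then for every quantum metric $g$ on this calculus and every quantum Levi-Civita connection $\nabla$ for $g$ with constant coefficients, the curvature $R_\nabla$ vanishes.
   Context: Standing setup. Work over $\mathbb F_2$. Let $(V,\circ)$ be a commutative associative algebra over $\mathbb F_2$ with basis $x^1,\dots,x^n$ and structure constants $x^\mu\circ x^\nu=\sum_\rho V^{\mu\nu}{}_\rho x^\rho$. Let $A=\mathbb F_2[x^1,\dots,x^n]$ be the polynomial algebra on the same symbols. The associated differential calculus is the $A$-bimodule $\Omega^1$ which is free as a left $A$-module on $\mathrm dx^1,\dots,\mathrm dx^n$, with right action determined by $\mathrm dx^\mu\, x^\nu=x^\nu\,\mathrm dx^\mu+\sum_\rho V^{\mu\nu}{}_\rho\,\mathrm dx^\rho$, together with the unique map $\mathrm d:A\to\Omega^1$ satisfying the Leibniz rule $\mathrm d(ab)=(\mathrm da)b+a\,\mathrm db$, $\mathrm d(x^\mu)=\mathrm dx^\mu$, $\mathrm d1=0$. The bimodule $\Omega^1\otimes_A\Omega^1$ is free as a left module on $\mathrm dx^\mu\otimes\mathrm dx^\nu$. $\Omega^2$ is the quotient of $\Omega^1\otimes_A\Omega^1$ by the sub-bimodule generated by $\mathrm dx^\mu\otimes\mathrm dx^\mu$ and $\mathrm dx^\mu\otimes\mathrm dx^\nu+\mathrm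 dx^\nu\otimes \mathrm dx^\mu$; the quotient map is denoted $\wedge$, and $\mathrm d$ is extended to $\Omega^1$ by $\mathrm d(a\,\mathrm dx^\mu)=\mathrm da\wedge\mathrm dx^\mu$. A quantum metric is $g=\sum_{\mu,\nu}g_{\mu\nu}\mathrm dx^\mu\otimes\mathrm dx^\nu$ with constants $g_{\mu\nu}\in\mathbb F_2$, $g_{\mu\nu}=g_{\nu\mu}$, the matrix $(g_{\mu\nu})$ invertible, and $g$ central: $x^\rho g=g x^\rho$ for all $\rho$. A bimodule connection is a pair $(\nabla,\sigma)$ with $\nabla:\Omega^1\to\Omega^1\otimes_A\Omega^1$ additive, $\nabla(a\omega)=a\nabla\omega+\mathrm da\otimes\omega$, and $\sigma:\Omega^1\otimes_A\Omega^1\to\Omega^1\otimes_A\Omega^1$ a bimodule map with $\nabla(\omega a)=(\nabla\omega)a+\sigma(\omega\otimes\mathrm da)$. It has constant coefficients if $\nabla\mathrm dx^\mu=\sum\Gamma^\mu{}_{\nu\rho}\mathrm dx^\nu\otimes\mathrm dx^\rho$ with $\Gamma^\mu{}_{\nu\rho}\in\mathbb F_2$. A quantum Levi-Civita connection (QLC) for $g$ is a bimodule connection with $\sigma$ invertible, torsion free ($\wedge\nabla=\mathrm d$ on $\Omega^1$) and metric compatible ($(\nabla\otimes\mathrm{id})g+(\sigma\otimes\mathrm{id})(\mathrm{id}\otimes\nabla)g=0$). Its curvature is $R_\nabla=(\mathrm d\otimes\mathrm{id}-(\wedge\otimes\mathrm{id})(\mathrm{id}\otimes\nabla))\nabla:\Omega^1\to\Omega^2\otimes_A\Omega^1$.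 Here the basis is $x^1=e$, $x^2=x$. *)

theory Defs
  imports "HOL-Library.Z2" "HOL-Computational_Algebra.Polynomial"
begin

text \<open>The ground field F_2 is the type bit. The two basis symbols are x^1 = e, x^2 = x.\<close>

datatype gen = E | X

text \<open>A = F_2[e,x], realised as bivariate polynomials (outer variable x,
  inner variable e).\<close>
type_synonym alg = "bit poly poly"

text \<open>Omega^1: left coefficients w.r.t. the left basis de, dx.
  Omega^1 (x)_A Omega^1: left coefficients w.r.t. dx^a (x) dx^b.
  Omega^2 is free of rank one on the class of de (x) dx; an element is its coefficient.
  Omega^2 (x)_A Omega^1: left coefficients w.r.t. (de/\dx) (x) dx^b.\<close>
type_synonym om1 = "gen \<Rightarrow> alg"
type_synonym om11 = "gen \<Rightarrow> gen \<Rightarrow> alg"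
type_synonym om2 = alg
type_synonym om21 = "gen \<Rightarrow> alg"

definition var :: "gen \<Rightarrow> alg" where
  "var m = (case m of E \<Rightarrow> [:[:0, 1:]:] | X \<Rightarrow> [:0, 1:])"

definition cst :: "bit \<Rightarrow> alg" where
  "cst c = [:[:c:]:]"

definition gsum :: "(gen \<Rightarrow> 'a::comm_monoid_add) \<Rightarrow> 'a" where
  "gsum f = f E + f X"

text \<open>The three algebras V: e is the unit, and x o x = 0 / x / e + x.
  vstr c m n r is the structure constant V^{mn}_r.\<close>
datatype alg_case = CaseA | CaseB | CaseC

definition vstr :: "alg_case \<Rightarrow> gen \<Rightarrow> gen \<Rightarrow> gen \<Rightarrow> bit" where
  "vstr c m n r =
     (if m = E then (if r = n then 1 else 0)
      else if n = E then (if r = m then 1 else 0)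
      else (case c of
              CaseA \<Rightarrow> 0
            | CaseB \<Rightarrow> (if r = X then 1 else 0)
            | CaseC \<Rightarrow> 1))"

definition dbasis :: "gen \<Rightarrow> om1" where
  "dbasis m = (\<lambda>n. if n = m then 1 else 0)"

text \<open>Right action of A on Omega^1: the (unique) map making Omega^1 an A-bimodule
  with dx^m x^n = x^n dx^m + sum_r V^{mn}_r dx^r.\<close>
definition is_right_action :: "(gen \<Rightarrow> gen \<Rightarrow> gen \<Rightarrow> bit) \<Rightarrow> (om1 \<Rightarrow> alg \<Rightarrow> om1) \<Rightarrow> bool" where
  "is_right_action V r \<longleftrightarrow>
     (\<forall>w u a. r (\<lambda>n. w n + u n) a = (\<lambda>n. r w a n + r u a n)) \<and>
     (\<forall>w a b. r w (a + b) = (\<lambda>n. r w a n + r w b n)) \<and>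
     (\<forall>w a b. r (\<lambda>n. b * w n) a = (\<lambda>n. b * r w a n)) \<and>
     (\<forall>w a b. r w (a * b) = r (r w a) b) \<and>
     (\<forall>w. r w 1 = w) \<and>
     (\<forall>m n. r (dbasis m) (var n) = (\<lambda>p. var n * dbasis m p + cst (V m n p)))"

text \<open>Tensor product over A of two 1-forms, in the left basis dx^a (x) dx^b.\<close>
definition tens :: "(om1 \<Rightarrow> alg \<Rightarrow> om1) \<Rightarrow> om1 \<Rightarrow> om1 \<Rightarrow> om11" where
  "tens r w u = (\<lambda>a b. gsum (\<lambda>m. w m * r (dbasis m) (u b) a))"

definition ract2 :: "(om1 \<Rightarrow> alg \<Rightarrow> om1) \<Rightarrow> om11 \<Rightarrow> alg \<Rightarrow> om11" where
  "ract2 r T f = (\<lambda>a b. gsum (\<lambda>m. gsum (\<lambda>n. T m n * tens r (dbasis m) (r (dbasis n) f) a b)))"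

text \<open>The quotient map /\ : Omega^1 (x)_A Omega^1 -> Omega^2, whose kernel is the sub-bimodule
  generated by dx^m (x) dx^m and dx^m (x) dx^n + dx^n (x) dx^m; its value is the
  coefficient of de /\ dx (note dx /\ de = de /\ dx in characteristic 2).\<close>
definition wedge :: "om11 \<Rightarrow> om2" where
  "wedge T = T E X + T X E"

definition is_dd :: "(om1 \<Rightarrow> alg \<Rightarrow> om1) \<Rightarrow> (alg \<Rightarrow> om1) \<Rightarrow> bool" where
  "is_dd r d \<longleftrightarrow>
     (\<forall>a b. d (a + b) = (\<lambda>n. d a n + d b n)) \<and>
     (\<forall>a b. d (a * b) = (\<lambda>n. r (d a) b n + a * d b n)) \<and>
     (\<forall>m. d (var m) = dbasis m) \<and>
     d 1 = (\<lambda>n. 0)"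

definition d1 :: "(om1 \<Rightarrow> alg \<Rightarrow> om1) \<Rightarrow> (alg \<Rightarrow> om1) \<Rightarrow> om1 \<Rightarrow> om2" where
  "d1 r d w = gsum (\<lambda>m. wedge (tens r (d (w m)) (dbasis m)))"

definition gtens :: "(gen \<Rightarrow> gen \<Rightarrow> bit) \<Rightarrow> om11" where
  "gtens g = (\<lambda>a b. cst (g a b))"

definition quantum_metric :: "(om1 \<Rightarrow> alg \<Rightarrow> om1) \<Rightarrow> (gen \<Rightarrow> gen \<Rightarrow> bit) \<Rightarrow> bool" where
  "quantum_metric r g \<longleftrightarrow>
     (\<forall>m n. g m n = g n m) \<and>
     g E E * g X X - g E X * g X E \<noteq> 0 \<and>
     (\<forall>p. (\<lambda>a b. var p * gtens g a b) = ract2 r (gtens g) (var p))"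

definition bimodule_connection ::
  "(om1 \<Rightarrow> alg \<Rightarrow> om1) \<Rightarrow> (alg \<Rightarrow> om1) \<Rightarrow> (om1 \<Rightarrow> om11) \<Rightarrow> (om11 \<Rightarrow> om11) \<Rightarrow> bool" where
  "bimodule_connection r d nabla sigma \<longleftrightarrow>
     (\<forall>w u. nabla (\<lambda>n. w n + u n) = (\<lambda>a b. nabla w a b + nabla u a b)) \<and>
     (\<forall>f w. nabla (\<lambda>n. f * w n) = (\<lambda>a b. f * nabla w a b + tens r (d f) w a b)) \<and>
     (\<forall>S T. sigma (\<lambda>a b. S a b + T a b) = (\<lambda>a b. sigma S a b + sigma T a b)) \<and>
     (\<forall>f T. sigma (\<lambda>a b. f * T a b) = (\<lambda>a b. f * sigma T a b)) \<and>
     (\<forall>f T. sigma (ract2 r T f) = ract2 r (sigma T) f) \<and>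
     (\<forall>w f. nabla (r w f) = (\<lambda>a b. ract2 r (nabla w) f a b + sigma (tens r w (d f)) a b))"

definition constant_coefficients :: "(om1 \<Rightarrow> om11) \<Rightarrow> bool" where
  "constant_coefficients nabla \<longleftrightarrow>
     (\<exists>Gam :: gen \<Rightarrow> gen \<Rightarrow> gen \<Rightarrow> bit. \<forall>m. nabla (dbasis m) = (\<lambda>a b. cst (Gam m a b)))"

definition torsion_free :: "(om1 \<Rightarrow> alg \<Rightarrow> om1) \<Rightarrow> (alg \<Rightarrow> om1) \<Rightarrow> (om1 \<Rightarrow> om11) \<Rightarrow> bool" where
  "torsion_free r d nabla \<longleftrightarrow> (\<forall>w. wedge (nabla w) = d1 r d w)"

text \<open>Metric compatibility (nabla (x) id) g + (sigma (x) id)(id (x) nabla) g = 0 in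
  Omega^1 (x)_A Omega^1 (x)_A Omega^1, written in the left basis dx^a (x) dx^c (x) dx^b.
  With g = sum_n xi_n (x) dx^n, xi_n = sum_m g_{mn} dx^m, and
  nabla dx^n = sum_b eta_{nb} (x) dx^b, the left-hand side is
  sum_n nabla(xi_n) (x) dx^n + sum_{n,b} sigma(xi_n (x) eta_{nb}) (x) dx^b.\<close>
definition metric_compatible ::
  "(om1 \<Rightarrow> alg \<Rightarrow> om1) \<Rightarrow> (gen \<Rightarrow> gen \<Rightarrow> bit) \<Rightarrow> (om1 \<Rightarrow> om11) \<Rightarrow> (om11 \<Rightarrow> om11) \<Rightarrow> bool" where
  "metric_compatible r g nabla sigma \<longleftrightarrow>
     (\<forall>a c b.
        nabla (\<lambda>m. cst (g m b)) a c
        + gsum (\<lambda>n. sigma (tens r (\<lambda>m. cst (g m n)) (\<lambda>p. nabla (dbasis n) p b)) a c) = 0)"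

definition QLC ::
  "(om1 \<Rightarrow> alg \<Rightarrow> om1) \<Rightarrow> (alg \<Rightarrow> om1) \<Rightarrow> (gen \<Rightarrow> gen \<Rightarrow> bit) \<Rightarrow> (om1 \<Rightarrow> om11) \<Rightarrow> (om11 \<Rightarrow> om11) \<Rightarrow> bool" where
  "QLC r d g nabla sigma \<longleftrightarrow>
     bimodule_connection r d nabla sigma \<and> bij sigma \<and>
     torsion_free r d nabla \<and> metric_compatible r g nabla sigma"

text \<open>Curvature R = (d (x) id - (/\ (x) id)(id (x) nabla)) nabla. Writing
  nabla w = sum_n zeta_n (x) dx^n with zeta_n = sum_m (nabla w)_{mn} dx^m, and
  nabla dx^n = sum_b eta_{nb} (x) dx^b, one gets
  R w = sum_b (d zeta_b - sum_n zeta_n /\ eta_{nb}) (x) dx^b;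
  the result is given by its left coefficients w.r.t. (de /\ dx) (x) dx^b.\<close>
definition curvature :: "(om1 \<Rightarrow> alg \<Rightarrow> om1) \<Rightarrow> (alg \<Rightarrow> om1) \<Rightarrow> (om1 \<Rightarrow> om11) \<Rightarrow> om1 \<Rightarrow> om21" where
  "curvature r d nabla w =
     (\<lambda>b. d1 r d (\<lambda>m. nabla w m b)
          - gsum (\<lambda>n. wedge (tens r (\<lambda>m. nabla w m n) (\<lambda>p. nabla (dbasis n) p b))))"

end

theory Submission
  imports Defs
begin

text \<open>Since e is the unit of V, right multiplication by de is determined by two operators
  P, Q on A (de f = P f de + Q f dx), and d is the inner derivation d f = de f + f de.
  Multiplicativity of the right action makes P and Q commute, which is exactly d(df) = 0.
  For a connection with constant Christoffel symbols \<Gamma> this leaves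
  R(w) = sum_m w_m K^m(\<Gamma>) with K quadratic in \<Gamma>. Torsion freeness, centrality of g and metric
  compatibility, evaluated at e = x = 0, are polynomial conditions on the finitely many
  constants \<Gamma>, g, and a finite case check shows that they force K = 0 in all three algebras.\<close>

declare add_bit_eq_xor[simp del] mult_bit_eq_and[simp del]

lemma two_alg_eq_0 [simp]: "(2::alg) = 0"
proof -
  have "(2::bit poly) = 0" by (metis bit_2_eq_0 of_nat_numeral of_nat_poly pCons_0_0)
  then show ?thesis by (metis of_nat_numeral of_nat_poly pCons_0_0)
qed

lemma add_self_alg [simp]: "(p::alg) + p = 0"
  by (metis mult_2 mult_zero_left two_alg_eq_0)

lemma uminus_alg [simp]: "- (q::alg) = q"
  using add_self_alg[of q] by (simp add: neg_eq_iff_add_eq_0)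

lemma diff_alg [simp]: "(p::alg) - q = p + q"
  by (simp only: diff_conv_add_uminus uminus_alg)

lemma add_self_bit [simp]: "(p::bit) + p = 0"
  by (cases p) auto

lemma cst_0 [simp]: "cst 0 = 0" by (simp add: cst_def)
lemma cst_1 [simp]: "cst 1 = 1" by (simp only: cst_def pCons_one)
lemma cst_add: "cst (a + b) = cst a + cst b" by (simp add: cst_def)
lemma cst_mult: "cst (a * b) = cst a * cst b" by (simp add: cst_def)

lemma alg_induct [case_names cst var add mult]:
  assumes cst: "\<And>c. P (cst c)" and var: "\<And>m. P (var m)"
    and add: "\<And>a b. P a \<Longrightarrow> P b \<Longrightarrow> P (a + b)"
    and mult: "\<And>a b. P a \<Longrightarrow> P b \<Longrightarrow> P (a * b)"
  shows "P f"
proof -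
  have inner: "P [:q:]" for q :: "bit poly"
  proof (induction q)
    case 0 then show ?case using cst[of 0] by (simp add: cst_def)
  next
    case (pCons a q)
    have "[:pCons a q:] = cst a + var E * [:q:]"
      by (simp add: cst_def var_def)
    then show ?case using pCons cst var add mult by metis
  qed
  show ?thesis
  proof (induction f)
    case 0 then show ?case using cst[of 0] by (simp add: cst_def)
  next
    case (pCons a q)
    have "pCons a q = [:a:] + var X * q"
      by (simp add: var_def)
    then show ?case using pCons inner var add mult by metis
  qed
qed

lemma all_gen: "(\<forall>m. P m) \<longleftrightarrow> P E \<and> P X" by (metis gen.exhaust)

lemma dbasis_cst: "dbasis m n = cst (if n = m then 1 else 0)" by (simp add: dbasis_def)

lemma om1_dbasis_decomp: "w = (\<lambda>n. w E * dbasis E n + w X * dbasis X n)"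
  by (rule ext, case_tac n) (simp_all add: dbasis_def)

definition basis2 :: "gen \<Rightarrow> gen \<Rightarrow> om11" where
  "basis2 m n = (\<lambda>a b. if a = m \<and> b = n then 1 else 0)"

lemma om11_basis2_decomp:
  "T = (\<lambda>a b. T E E * basis2 E E a b + (T E X * basis2 E X a b
                + (T X E * basis2 X E a b + T X X * basis2 X X a b)))"
  by (intro ext, rename_tac a b, case_tac a; case_tac b) (simp_all add: basis2_def)

text \<open>Evaluation at the origin e = x = 0; it turns polynomial identities into conditions on
  constants.\<close>
definition eval0 :: "alg \<Rightarrow> bit" where "eval0 q = poly (poly q 0) 0"

lemma eval0_add [simp]: "eval0 (p + q) = eval0 p + eval0 q" by (simp add: eval0_def)
lemma eval0_mult [simp]: "eval0 (p * q) = eval0 p * eval0 q" by (simp add: eval0_def)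
lemma eval0_cst [simp]: "eval0 (cst a) = a" by (simp add: eval0_def cst_def)
lemma eval0_var [simp]: "eval0 (var m) = 0" by (cases m) (simp_all add: eval0_def var_def)
lemma eval0_0 [simp]: "eval0 0 = 0" by (simp add: eval0_def)
lemma eval0_1 [simp]: "eval0 1 = 1" by (simp add: eval0_def)

text \<open>For Christoffel symbols \<Gamma> and metric g: the curvature coefficients, and the values at
  the origin of ract2 of a constant tensor by var n, of sigma on basis2, and of the
  metric-compatibility expression.\<close>

definition curv_coeff :: "(gen \<Rightarrow> gen \<Rightarrow> gen \<Rightarrow> bit) \<Rightarrow> gen \<Rightarrow> gen \<Rightarrow> bit" where
  "curv_coeff \<Gamma> k b = gsum (\<lambda>n. \<Gamma> k E n * \<Gamma> n X b + \<Gamma> k X n * \<Gamma> n E b)"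

definition ract2_coeff0 ::
  "alg_case \<Rightarrow> (gen \<Rightarrow> gen \<Rightarrow> bit) \<Rightarrow> gen \<Rightarrow> gen \<Rightarrow> gen \<Rightarrow> bit" where
  "ract2_coeff0 c t n a b = gsum (\<lambda>k. gsum (\<lambda>l. t k l *
      ((if l = b then vstr c k n a else 0) + (if k = a then vstr c l n b else 0))))"

definition sigma_coeff0 ::
  "alg_case \<Rightarrow> (gen \<Rightarrow> gen \<Rightarrow> gen \<Rightarrow> bit) \<Rightarrow> gen \<Rightarrow> gen \<Rightarrow> gen \<Rightarrow> gen \<Rightarrow> bit" where
  "sigma_coeff0 c \<Gamma> m n a b = (if n = a \<and> m = b then 1 else 0)
      + gsum (\<lambda>p. vstr c m n p * \<Gamma> p a b) + ract2_coeff0 c (\<Gamma> m) n a b"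

definition metric_compat_coeff0 :: "alg_case \<Rightarrow> (gen \<Rightarrow> gen \<Rightarrow> bit) \<Rightarrow>
    (gen \<Rightarrow> gen \<Rightarrow> gen \<Rightarrow> bit) \<Rightarrow> gen \<Rightarrow> gen \<Rightarrow> gen \<Rightarrow> bit" where
  "metric_compat_coeff0 c g \<Gamma> a a' b = gsum (\<lambda>m. g m b * \<Gamma> m a a')
      + gsum (\<lambda>n. gsum (\<lambda>k. gsum (\<lambda>l. g k n * \<Gamma> n l b * sigma_coeff0 c \<Gamma> k l a a')))"

lemma curv_coeff_eq_0:
  assumes g_sym: "g X E = g E X" and g_inv: "g E E * g X X - g E X * g X E \<noteq> 0"
    and torsion: "\<And>m. \<Gamma> m X E = \<Gamma> m E X"
    and central: "\<And>a b. ract2_coeff0 c g X a b = 0"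
    and compat: "\<And>a a' b. metric_compat_coeff0 c g \<Gamma> a a' b = 0"
  shows "curv_coeff \<Gamma> k b = 0"
proof -
  have coeff0_eqs: "ract2_coeff0 c g X E E = 0 \<and> ract2_coeff0 c g X E X = 0
      \<and> ract2_coeff0 c g X X E = 0 \<and> ract2_coeff0 c g X X X = 0
      \<and> metric_compat_coeff0 c g \<Gamma> E E E = 0 \<and> metric_compat_coeff0 c g \<Gamma> E E X = 0
      \<and> metric_compat_coeff0 c g \<Gamma> E X E = 0 \<and> metric_compat_coeff0 c g \<Gamma> E X X = 0
      \<and> metric_compat_coeff0 c g \<Gamma> X E E = 0 \<and> metric_compat_coeff0 c g \<Gamma> X E X = 0
      \<and> metric_compat_coeff0 c g \<Gamma> X X E = 0 \<and> metric_compat_coeff0 c g \<Gamma> X X X = 0"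
    using central compat by blast
  have "curv_coeff \<Gamma> E E = 0 \<and> curv_coeff \<Gamma> E X = 0
      \<and> curv_coeff \<Gamma> X E = 0 \<and> curv_coeff \<Gamma> X X = 0"
    using coeff0_eqs g_inv
    apply (simp only: ract2_coeff0_def metric_compat_coeff0_def sigma_coeff0_def
        curv_coeff_def gsum_def g_sym torsion[of E] torsion[of X])
    apply (cases c; cases "g E E"; cases "g E X"; cases "g X X")
        apply (simp_all add: vstr_def)
    apply (cases "\<Gamma> E E E"; cases "\<Gamma> E E X"; cases "\<Gamma> E X X";
        cases "\<Gamma> X E E"; cases "\<Gamma> X E X"; cases "\<Gamma> X X X"; simp)+
    done
  then show ?thesis by (cases k; cases b) auto
qed

locale calculus =
  fixes c :: alg_case and r :: "om1 \<Rightarrow> alg \<Rightarrow> om1" and d :: "alg \<Rightarrow> om1"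
  assumes right_action: "is_right_action (vstr c) r" and dd: "is_dd r d"
begin

lemma ract_add: "r (\<lambda>n. w n + u n) a = (\<lambda>n. r w a n + r u a n)"
  using right_action unfolding is_right_action_def by blast
lemma ract_add_right: "r w (a + b) = (\<lambda>n. r w a n + r w b n)"
  using right_action unfolding is_right_action_def by blast
lemma ract_scale: "r (\<lambda>n. b * w n) a = (\<lambda>n. b * r w a n)"
  using right_action unfolding is_right_action_def by blast
lemma ract_mult: "r w (a * b) = r (r w a) b"
  using right_action unfolding is_right_action_def by blast
lemma ract_one: "r w 1 = w"
  using right_action unfolding is_right_action_def by blast
lemma ract_var: "r (dbasis m) (var n) = (\<lambda>p. var n * dbasis m p + cst (vstr c m n p))"
  using right_action unfolding is_right_action_def by blast

lemma ract_zero: "r w 0 = (\<lambda>n. 0)"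
  using ract_add_right[of w 0 0] by (simp add: fun_eq_iff)

lemma ract_cst: "r w (cst a) = (\<lambda>n. cst a * w n)"
  by (cases a) (auto simp: ract_zero ract_one)

lemma ract_dbasis_decomp: "r w f = (\<lambda>n. w E * r (dbasis E) f n + w X * r (dbasis X) f n)"
  by (subst om1_dbasis_decomp) (simp add: ract_add ract_scale)

lemma d_add: "d (a + b) = (\<lambda>n. d a n + d b n)" using dd unfolding is_dd_def by blast
lemma d_mult: "d (a * b) = (\<lambda>n. r (d a) b n + a * d b n)" using dd unfolding is_dd_def by blast
lemma d_var: "d (var m) = dbasis m" using dd unfolding is_dd_def by blast
lemma d_one: "d 1 = (\<lambda>n. 0)" using dd unfolding is_dd_def by blast

lemma d_zero: "d 0 = (\<lambda>n. 0)"
  using d_add[of 0 0] by (simp add: fun_eq_iff)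

lemma d_cst: "d (cst a) = (\<lambda>n. 0)" by (cases a) (auto simp: d_zero d_one)

lemma d_mult_cst: "d (a * cst b) = (\<lambda>n. d a n * cst b)"
  by (simp add: d_mult d_cst ract_cst mult.commute)

lemma d_eq_commutator_de: "d f = (\<lambda>n. r (dbasis E) f n + f * dbasis E n)"
proof (induction f rule: alg_induct)
  case (cst a) then show ?case
    by (cases a) (auto simp: d_zero d_one ract_zero ract_one fun_eq_iff dbasis_def)
next
  case (var m) then show ?case
    by (simp only: d_var ract_var) (cases m; auto simp: fun_eq_iff dbasis_def vstr_def)
next
  case (add a b) then show ?case by (simp add: d_add ract_add_right fun_eq_iff algebra_simps)
next
  case (mult a b)
  have "r (d a) b = (\<lambda>n. r (r (dbasis E) a) b n + a * r (dbasis E) b n)"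
    using mult by (simp add: ract_add ract_scale)
  with mult show ?case by (simp add: d_mult ract_mult fun_eq_iff algebra_simps)
qed

definition P :: "alg \<Rightarrow> alg" where "P f = r (dbasis E) f E"
definition Q :: "alg \<Rightarrow> alg" where "Q f = r (dbasis E) f X"

lemma d_E: "d f E = P f + f" by (simp add: d_eq_commutator_de P_def dbasis_def)
lemma d_X: "d f X = Q f" by (simp add: d_eq_commutator_de Q_def dbasis_def)

lemma P_add: "P (f + g) = P f + P g" by (simp add: P_def ract_add_right)
lemma Q_add: "Q (f + g) = Q f + Q g" by (simp add: Q_def ract_add_right)
lemma P_cst: "P (cst a) = cst a" by (simp add: P_def ract_cst dbasis_def)
lemma Q_cst: "Q (cst a) = 0" by (simp add: Q_def ract_cst dbasis_def)

lemma ract_dE_mult: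
  "r (dbasis E) (f * g) = (\<lambda>n. P f * r (dbasis E) g n + Q f * r (dbasis X) g n)"
  by (simp add: ract_mult ract_dbasis_decomp[of "r (dbasis E) f"] P_def Q_def)

lemma ract_dX_mult: "r (dbasis X) (f * g)
    = (\<lambda>n. r (dbasis X) f E * r (dbasis E) g n + r (dbasis X) f X * r (dbasis X) g n)"
  by (simp add: ract_mult ract_dbasis_decomp[of "r (dbasis X) f"])

abbreviation "xxE \<equiv> cst (vstr c X X E)"
abbreviation "xxX \<equiv> cst (vstr c X X X)"

lemma ract_dX: "r (dbasis X) f = (\<lambda>n. if n = E then xxE * Q f else P f + xxX * Q f)"
proof (induction f rule: alg_induct)
  case (cst a) then show ?case
    by (simp add: ract_cst P_cst Q_cst fun_eq_iff dbasis_def) (metis gen.exhaust)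
next
  case (var m) then show ?case
    by (simp only: ract_var P_def Q_def)
      (cases m; auto simp: fun_eq_iff all_gen dbasis_def vstr_def)
next
  case (add f g) then show ?case
    by (auto simp: ract_add_right P_add Q_add fun_eq_iff algebra_simps)
next
  case (mult f g)
  have P_mult: "P (f * g) = P f * P g + Q f * (xxE * Q g)"
    using mult(2) by (simp add: P_def ract_dE_mult)
  have Q_mult: "Q (f * g) = P f * Q g + Q f * (P g + xxX * Q g)"
    using mult(2) by (simp add: Q_def ract_dE_mult)
  show ?case
    apply (subst ract_dX_mult)
    apply (subst mult(1))+
    apply (subst mult(2))+
    by (auto simp: fun_eq_iff all_gen P_mult Q_mult algebra_simps
        P_def[symmetric] Q_def[symmetric])
qed

lemma P_mult: "P (f * g) = P f * P g + xxE * Q f * Q g"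
  by (simp add: P_def ract_dE_mult ract_dX)

lemma Q_mult: "Q (f * g) = P f * Q g + Q f * P g + xxX * Q f * Q g"
  by (simp add: Q_def ract_dE_mult ract_dX) (simp add: P_def Q_def algebra_simps)

lemma P_Q_commute: "P (Q f) = Q (P f)"
proof (induction f rule: alg_induct)
  case (cst a) then show ?case by (simp add: P_cst Q_cst flip: cst_0)
next
  case (var m) then show ?case
  proof (cases m)
    case E
    have "Q (var E) = 0" "P (var E) = var E + 1"
      by (simp_all only: P_def Q_def ract_var) (simp_all add: dbasis_def vstr_def)
    then show ?thesis using E Q_add[of "var E" 1] Q_cst[of 1] P_cst[of 0] by simp
  next
    case X
    have "Q (var X) = 1" "P (var X) = var X"
      by (simp_all only: P_def Q_def ract_var) (simp_all add: dbasis_def vstr_def)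
    then show ?thesis using X P_cst[of 1] by simp
  qed
next
  case (add f g) then show ?case by (simp add: P_add Q_add)
next
  case (mult f g) then show ?case
    by (simp add: P_add Q_add P_mult Q_mult P_cst Q_cst algebra_simps flip: cst_mult)
qed

lemma tens_dbasis_right_apply: "tens r u (dbasis m) a b = (if b = m then u a else 0)"
  by (simp add: tens_def gsum_def dbasis_cst ract_cst) (cases a; simp add: dbasis_def)

lemma tens_dbasis_right: "tens r u (dbasis m) = (\<lambda>a b. if b = m then u a else 0)"
  by (simp add: tens_dbasis_right_apply fun_eq_iff)

lemma tens_dbasis_left: "tens r (dbasis m) u a b = r (dbasis m) (u b) a"
  by (cases m) (simp_all add: tens_def gsum_def dbasis_def)

lemma tens_dbasis_dbasis: "tens r (dbasis m) (dbasis n) = basis2 m n"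
  by (simp only: tens_dbasis_right) (simp add: basis2_def dbasis_def fun_eq_iff)

lemma tens_cst: "tens r u (\<lambda>p. cst (h p)) a b = u a * cst (h b)"
  by (cases a) (simp_all add: tens_def gsum_def ract_cst dbasis_def)

lemma d1_eq: "d1 r d w = d (w X) E + d (w E) X"
  by (simp add: d1_def gsum_def wedge_def tens_dbasis_right)

lemma d1_d: "d1 r d (d f) = 0"
  by (simp add: d1_eq d_E d_X Q_add P_Q_commute)

lemma eval0_ract2_var:
  "eval0 (ract2 r (\<lambda>a b. cst (t a b)) (var n) a b) = ract2_coeff0 c t n a b"
  apply (simp add: ract2_def gsum_def tens_dbasis_left ract_var dbasis_cst)
  apply (simp add: ract_add_right ract_mult ract_cst ract_var)
  by (cases n; cases a; cases b) (simp_all add: ract2_coeff0_def gsum_def dbasis_def algebra_simps)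

lemma central_coeff0:
  assumes "quantum_metric r g"
  shows "ract2_coeff0 c g X a b = 0"
proof -
  have "(\<lambda>a b. var X * gtens g a b) = ract2 r (gtens g) (var X)"
    using assms unfolding quantum_metric_def by blast
  then have "eval0 (var X * gtens g a b) = eval0 (ract2 r (\<lambda>a b. cst (g a b)) (var X) a b)"
    unfolding gtens_def by metis
  then show ?thesis by (simp add: eval0_ract2_var)
qed

end

locale constant_connection = calculus +
  fixes nabla :: "om1 \<Rightarrow> om11" and sigma :: "om11 \<Rightarrow> om11"
    and \<Gamma> :: "gen \<Rightarrow> gen \<Rightarrow> gen \<Rightarrow> bit"
  assumes connection: "bimodule_connection r d nabla sigma"
    and nabla_dbasis: "\<And>m. nabla (dbasis m) = (\<lambda>a b. cst (\<Gamma> m a b))"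
begin

lemma nabla_add: "nabla (\<lambda>n. w n + u n) = (\<lambda>a b. nabla w a b + nabla u a b)"
  using connection unfolding bimodule_connection_def by blast
lemma nabla_scale: "nabla (\<lambda>n. f * w n) = (\<lambda>a b. f * nabla w a b + tens r (d f) w a b)"
  using connection unfolding bimodule_connection_def by blast
lemma sigma_add: "sigma (\<lambda>a b. S a b + T a b) = (\<lambda>a b. sigma S a b + sigma T a b)"
  using connection unfolding bimodule_connection_def by blast
lemma sigma_scale: "sigma (\<lambda>a b. f * T a b) = (\<lambda>a b. f * sigma T a b)"
  using connection unfolding bimodule_connection_def by blast
lemma nabla_ract:
  "nabla (r w f) = (\<lambda>a b. ract2 r (nabla w) f a b + sigma (tens r w (d f)) a b)"
  using connection unfolding bimodule_connection_def by blast

lemma nabla_apply: "nabla w a b = w E * cst (\<Gamma> E a b) + w X * cst (\<Gamma> X a b) + d (w b) a"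
proof -
  have "nabla w = (\<lambda>a b. w E * cst (\<Gamma> E a b) + tens r (d (w E)) (dbasis E) a b
                         + (w X * cst (\<Gamma> X a b) + tens r (d (w X)) (dbasis X) a b))"
    by (subst om1_dbasis_decomp) (simp add: nabla_add nabla_scale nabla_dbasis)
  then show ?thesis by (cases b) (simp_all add: tens_dbasis_right_apply algebra_simps)
qed

lemma curvature_apply:
  "curvature r d nabla w b = w E * cst (curv_coeff \<Gamma> E b) + w X * cst (curv_coeff \<Gamma> X b)"
proof -
  have "curvature r d nabla w b = w E * cst (curv_coeff \<Gamma> E b) + w X * cst (curv_coeff \<Gamma> X b)
      + d1 r d (d (w b))"
    by (simp add: curvature_def d1_eq nabla_apply nabla_dbasis tens_cst gsum_def wedge_def
        d_add d_mult_cst curv_coeff_def cst_add cst_mult algebra_simps)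
  then show ?thesis by (simp add: d1_d)
qed

lemma sigma_basis2:
  "sigma (basis2 m n) a b = nabla (r (dbasis m) (var n)) a b
     + ract2 r (\<lambda>a b. cst (\<Gamma> m a b)) (var n) a b"
  using fun_cong[OF fun_cong[OF nabla_ract[of "dbasis m" "var n"]], of a b]
  by (simp add: d_var tens_dbasis_dbasis nabla_dbasis)

lemma eval0_sigma_basis2: "eval0 (sigma (basis2 m n) a b) = sigma_coeff0 c \<Gamma> m n a b"
  apply (simp only: sigma_basis2 eval0_add eval0_ract2_var nabla_apply ract_var)
  apply (simp add: d_add dbasis_cst d_mult_cst d_cst d_var)
  by (cases m; cases n; cases a; cases b)
    (simp_all add: sigma_coeff0_def gsum_def dbasis_def algebra_simps)

lemma eval0_sigma:
  "eval0 (sigma T a b) = gsum (\<lambda>k. gsum (\<lambda>l. eval0 (T k l) * sigma_coeff0 c \<Gamma> k l a b))"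
  by (subst om11_basis2_decomp)
    (simp add: sigma_add sigma_scale eval0_sigma_basis2 gsum_def algebra_simps)

lemma metric_compat_coeff0_eq_0:
  assumes "metric_compatible r g nabla sigma"
  shows "metric_compat_coeff0 c g \<Gamma> a a' b = 0"
proof -
  have "nabla (\<lambda>m. cst (g m b)) a a'
      + gsum (\<lambda>n. sigma (tens r (\<lambda>m. cst (g m n)) (\<lambda>p. nabla (dbasis n) p b)) a a') = 0"
    using assms unfolding metric_compatible_def by blast
  then have "eval0 (nabla (\<lambda>m. cst (g m b)) a a'
      + gsum (\<lambda>n. sigma (tens r (\<lambda>m. cst (g m n)) (\<lambda>p. nabla (dbasis n) p b)) a a')) = 0"
    by simp
  then show ?thesis
    by (simp add: gsum_def eval0_sigma nabla_apply d_cst nabla_dbasis tens_cst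
        metric_compat_coeff0_def algebra_simps)
qed

lemma torsion_free_symmetric:
  assumes "torsion_free r d nabla"
  shows "\<Gamma> m X E = \<Gamma> m E X"
proof -
  have "eval0 (wedge (nabla (dbasis m))) = eval0 (d1 r d (dbasis m))"
    using assms unfolding torsion_free_def by simp
  then have "\<Gamma> m E X + \<Gamma> m X E = 0"
    by (simp add: wedge_def nabla_dbasis d1_eq dbasis_cst d_cst)
  then show ?thesis by (cases "\<Gamma> m E X"; cases "\<Gamma> m X E") simp_all
qed

end

theorem proposition3p1:
  fixes c :: alg_case
    and r :: "om1 \<Rightarrow> alg \<Rightarrow> om1"
    and d :: "alg \<Rightarrow> om1"
    and g :: "gen \<Rightarrow> gen \<Rightarrow> bit"
    and nabla :: "om1 \<Rightarrow> om11"
    and sigma :: "om11 \<Rightarrow> om11"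
  assumes "is_right_action (vstr c) r"
    and "is_dd r d"
    and "quantum_metric r g"
    and "QLC r d g nabla sigma"
    and "constant_coefficients nabla"
  shows "\<forall>w. curvature r d nabla w = (\<lambda>b. 0)"
proof -
  from assms(5) obtain \<Gamma> where "\<forall>m. nabla (dbasis m) = (\<lambda>a b. cst (\<Gamma> m a b))"
    unfolding constant_coefficients_def by blast
  moreover have "bimodule_connection r d nabla sigma" "torsion_free r d nabla"
    "metric_compatible r g nabla sigma"
    using assms(4) unfolding QLC_def by auto
  ultimately interpret constant_connection c r d nabla sigma \<Gamma>
    using assms(1,2) by unfold_locales auto
  have "g X E = g E X" "g E E * g X X - g E X * g X E \<noteq> 0"
    using assms(3) unfolding quantum_metric_def by auto
  then have "curv_coeff \<Gamma> k b = 0" for k b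
    by (rule curv_coeff_eq_0[OF _ _ torsion_free_symmetric central_coeff0[OF assms(3)]
          metric_compat_coeff0_eq_0]) fact+
  then show ?thesis by (simp add: fun_eq_iff curvature_apply)
qed

end
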